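(* Let $J=\bigoplus_{(k,m)\in\mathbb{Z}_{\ge0}^2}J_{k,m}$ be a commutative bigraded ring. For $n\in\mathbb{Q}_{>0}$ put $J_n=\bigoplus_{(k,m):\,m=kn}J_{k,m}$ and $J_{\le n}=\bigoplus_{(k,m):\,m\le kn}J_{k,m}$. Fix $n\in\mathbb{Q}_{>0}$ and suppose that $J_{\le n}$ is finitely generated as an algebra over $J_{0,0}$. Then $J_n$ is finitely generated as an algebra over $J_{0,0}$.
   Context: The sums defining $J_n$ and $J_{\le n}$ range over pairs $(k,m)\in\mathbb{Z}_{\ge0}^2$; both are subrings of $J$ containing $J_{0,0}$. *)

theory Defs
  imports Complex_Main
begin

definition bigraded :: "(nat \<Rightarrow> nat \<Rightarrow> 'a::comm_ring_1 set) \<Rightarrow> bool" where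
  "bigraded J \<longleftrightarrow>
     (\<forall>k m. 0 \<in> J k m \<and> (\<forall>x\<in>J k m. \<forall>y\<in>J k m. x + y \<in> J k m) \<and> (\<forall>x\<in>J k m. - x \<in> J k m))
   \<and> (\<forall>k m k' m' x y. x \<in> J k m \<longrightarrow> y \<in> J k' m' \<longrightarrow> x * y \<in> J (k + k') (m + m'))
   \<and> 1 \<in> J 0 0
   \<and> (\<forall>x. \<exists>!f. finite {p. f p \<noteq> 0} \<and> (\<forall>k m. f (k, m) \<in> J k m)
                 \<and> x = (\<Sum>p\<in>{p. f p \<noteq> 0}. f p))"

definition graded_part :: "(nat \<Rightarrow> nat \<Rightarrow> 'a::comm_ring_1 set) \<Rightarrow> (nat \<Rightarrow> nat \<Rightarrow> bool) \<Rightarrow> 'a set" where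
  "graded_part J P = {x. \<exists>f. finite {p. f p \<noteq> 0} \<and> (\<forall>k m. f (k, m) \<in> J k m)
       \<and> (\<forall>k m. f (k, m) \<noteq> 0 \<longrightarrow> P k m) \<and> x = (\<Sum>p\<in>{p. f p \<noteq> 0}. f p)}"

definition J_eq :: "(nat \<Rightarrow> nat \<Rightarrow> 'a::comm_ring_1 set) \<Rightarrow> rat \<Rightarrow> 'a set" where
  "J_eq J n = graded_part J (\<lambda>k m. of_nat m = of_nat k * n)"

definition J_le :: "(nat \<Rightarrow> nat \<Rightarrow> 'a::comm_ring_1 set) \<Rightarrow> rat \<Rightarrow> 'a set" where
  "J_le J n = graded_part J (\<lambda>k m. of_nat m \<le> of_nat k * n)"

inductive_set ring_gen :: "'a::comm_ring_1 set \<Rightarrow> 'a set" for A where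
  gen: "a \<in> A \<Longrightarrow> a \<in> ring_gen A"
| one: "1 \<in> ring_gen A"
| zero: "0 \<in> ring_gen A"
| neg: "a \<in> ring_gen A \<Longrightarrow> - a \<in> ring_gen A"
| add: "a \<in> ring_gen A \<Longrightarrow> b \<in> ring_gen A \<Longrightarrow> a + b \<in> ring_gen A"
| mult: "a \<in> ring_gen A \<Longrightarrow> b \<in> ring_gen A \<Longrightarrow> a * b \<in> ring_gen A"

definition fin_gen_algebra :: "'a::comm_ring_1 set \<Rightarrow> 'a set \<Rightarrow> bool" where
  "fin_gen_algebra R B \<longleftrightarrow> (\<exists>S. finite S \<and> S \<subseteq> B \<and> ring_gen (R \<union> S) = B)"

end

theory Submission
  imports Defs
begin

text \<open>Let \<open>P\<close> keep the homogeneous components of degree \<open>(k, m)\<close> with \<open>m = k n\<close> and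
  discard the others. On \<open>J\<^sub>\<le>\<^sub>n\<close> this is a ring homomorphism: if \<open>m \<le> k n\<close> and
  \<open>m' \<le> k' n\<close>, then \<open>m + m' = (k + k') n\<close> forces equality in both inequalities, so
  \<open>J\<^sub>n\<close> is a face of \<open>J\<^sub>\<le>\<^sub>n\<close>. As \<open>P\<close> fixes \<open>J\<^sub>n \<supseteq> J\<^sub>0\<^sub>,\<^sub>0\<close>, it maps
  \<open>J\<^sub>\<le>\<^sub>n = J\<^sub>0\<^sub>,\<^sub>0[S]\<close> onto \<open>J\<^sub>n = J\<^sub>0\<^sub>,\<^sub>0[P S]\<close>.\<close>

lemma ring_gen_image:
  fixes f :: "'a::comm_ring_1 \<Rightarrow> 'b::comm_ring_1"
  assumes f_one: "f 1 = 1"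
    and f_add: "\<And>a b. a \<in> ring_gen A \<Longrightarrow> b \<in> ring_gen A \<Longrightarrow> f (a + b) = f a + f b"
    and f_mult: "\<And>a b. a \<in> ring_gen A \<Longrightarrow> b \<in> ring_gen A \<Longrightarrow> f (a * b) = f a * f b"
  shows "f ` ring_gen A = ring_gen (f ` A)"
proof
  have f_zero: "f 0 = 0"
    using f_add[OF ring_gen.zero ring_gen.zero] by simp
  have f_neg: "f (- a) = - f a" if "a \<in> ring_gen A" for a
    using f_add[OF that ring_gen.neg[OF that]] f_zero by (simp add: eq_neg_iff_add_eq_0 add.commute)
  show "f ` ring_gen A \<subseteq> ring_gen (f ` A)"
  proof clarify
    fix x assume "x \<in> ring_gen A"
    then show "f x \<in> ring_gen (f ` A)"
      by induction (auto simp: f_one f_zero f_neg f_add f_mult intro: ring_gen.intros)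
  qed
  show "ring_gen (f ` A) \<subseteq> f ` ring_gen A"
  proof
    fix y assume "y \<in> ring_gen (f ` A)"
    then show "y \<in> f ` ring_gen A"
    proof induction
      case (gen a)
      then show ?case by (auto intro: ring_gen.gen)
    next
      case one
      show ?case using ring_gen.one f_one by (metis image_eqI)
    next
      case zero
      show ?case using ring_gen.zero f_zero by (metis image_eqI)
    next
      case (neg a)
      then obtain x where "x \<in> ring_gen A" "a = f x" by blast
      then show ?case using ring_gen.neg f_neg by (metis image_eqI)
    next
      case (add a b)
      then obtain x y where "x \<in> ring_gen A" "y \<in> ring_gen A" "a = f x" "b = f y" by blast
      then show ?case using ring_gen.add f_add by (metis image_eqI)
    next
      case (mult a b)
      then obtain x y where "x \<in> ring_gen A" "y \<in> ring_gen A" "a = f x" "b = f y" by blast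
      then show ?case using ring_gen.mult f_mult by (metis image_eqI)
    qed
  qed
qed

lemma graded_part_mono:
  "(\<And>k m. L k m \<Longrightarrow> L' k m) \<Longrightarrow> graded_part J L \<subseteq> graded_part J L'"
  unfolding graded_part_def by blast

lemma sum_over_support:
  "finite A \<Longrightarrow> {p. f p \<noteq> 0} \<subseteq> A \<Longrightarrow> sum f A = (\<Sum>p\<in>{p. f p \<noteq> 0}. f p)"
  by (rule sum.mono_neutral_right) auto

locale bigraded_ring =
  fixes J :: "nat \<Rightarrow> nat \<Rightarrow> 'a::comm_ring_1 set"
  assumes bigraded: "bigraded J"
begin

lemma zero_closed: "0 \<in> J k m"
  and add_closed: "x \<in> J k m \<Longrightarrow> y \<in> J k m \<Longrightarrow> x + y \<in> J k m"
  and mult_closed: "x \<in> J k m \<Longrightarrow> y \<in> J k' m' \<Longrightarrow> x * y \<in> J (k + k') (m + m')"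
  and one_closed: "1 \<in> J 0 0"
  using bigraded unfolding bigraded_def by simp_all

definition is_decomposition :: "(nat \<times> nat \<Rightarrow> 'a) \<Rightarrow> bool" where
  "is_decomposition f \<longleftrightarrow> finite {p. f p \<noteq> 0} \<and> (\<forall>k m. f (k, m) \<in> J k m)"

definition component :: "'a \<Rightarrow> nat \<times> nat \<Rightarrow> 'a" where
  "component x = (THE f. is_decomposition f \<and> x = (\<Sum>p\<in>{p. f p \<noteq> 0}. f p))"

lemma decomposition_ex1: "\<exists>!f. is_decomposition f \<and> x = (\<Sum>p\<in>{p. f p \<noteq> 0}. f p)"
  using bigraded unfolding bigraded_def is_decomposition_def conj_assoc by (elim conjE) (rule spec)

lemma component_is_decomposition: "is_decomposition (component x)"
  and sum_component: "x = (\<Sum>p\<in>{p. component x p \<noteq> 0}. component x p)"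
  using theI'[OF decomposition_ex1[of x]] unfolding component_def by blast+

lemma finite_component_support: "finite {p. component x p \<noteq> 0}"
  and component_mem: "component x (k, m) \<in> J k m"
  using component_is_decomposition unfolding is_decomposition_def by blast+

lemma component_eqI:
  assumes "is_decomposition f" "finite A" "{p. f p \<noteq> 0} \<subseteq> A" "x = sum f A"
  shows "component x = f"
  unfolding component_def
  by (rule the1_equality[OF decomposition_ex1]) (use assms sum_over_support in auto)

lemma component_add: "component (x + y) p = component x p + component y p"
proof -
  let ?A = "{p. component x p \<noteq> 0} \<union> {p. component y p \<noteq> 0}"
  have fin: "finite ?A"
    using finite_component_support by blast
  have "component (x + y) = (\<lambda>p. component x p + component y p)"
  proof (rule component_eqI[OF _ fin])
    show "{p. component x p + component y p \<noteq> 0} \<subseteq> ?A"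
      by auto
    then show "is_decomposition (\<lambda>p. component x p + component y p)"
      unfolding is_decomposition_def using finite_subset[OF _ fin] add_closed component_mem
      by auto
    show "x + y = (\<Sum>p\<in>?A. component x p + component y p)"
      using sum_over_support[OF fin, of "component x"] sum_over_support[OF fin, of "component y"]
        sum_component[of x] sum_component[of y]
      by (simp add: sum.distrib)
  qed
  then show ?thesis by simp
qed

lemma component_homogeneous: "h \<in> J k m \<Longrightarrow> component h = (\<lambda>p. if p = (k, m) then h else 0)"
  by (rule component_eqI[where A = "{(k, m)}"]) (auto simp: is_decomposition_def zero_closed)

lemma component_graded_part:
  assumes "x \<in> graded_part J L" "component x p \<noteq> 0"
  shows "L (fst p) (snd p)"
proof -
  obtain f where f: "finite {p. f p \<noteq> 0}" "\<forall>k m. f (k, m) \<in> J k m"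
      "\<forall>k m. f (k, m) \<noteq> 0 \<longrightarrow> L k m" "x = (\<Sum>p\<in>{p. f p \<noteq> 0}. f p)"
    using assms(1) unfolding graded_part_def by blast
  have "component x = f"
    by (rule component_eqI[OF _ f(1)]) (use f in \<open>auto simp: is_decomposition_def\<close>)
  then show ?thesis
    using f(3) assms(2) by (cases p) auto
qed

lemma graded_partE:
  assumes "x \<in> graded_part J L"
  obtains A f where "finite A" "\<And>p. p \<in> A \<Longrightarrow> f p \<in> J (fst p) (snd p)"
    "\<And>p. p \<in> A \<Longrightarrow> L (fst p) (snd p)" "x = sum f A"
  using assms unfolding graded_part_def by force

definition graded_proj :: "(nat \<Rightarrow> nat \<Rightarrow> bool) \<Rightarrow> 'a \<Rightarrow> 'a" where
  "graded_proj L x =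
     (\<Sum>p\<in>{p. component x p \<noteq> 0}. if L (fst p) (snd p) then component x p else 0)"

lemma graded_proj_eq_sum:
  "finite A \<Longrightarrow> {p. component x p \<noteq> 0} \<subseteq> A \<Longrightarrow>
    graded_proj L x = (\<Sum>p\<in>A. if L (fst p) (snd p) then component x p else 0)"
  unfolding graded_proj_def by (rule sum.mono_neutral_left) auto

lemma graded_proj_add: "graded_proj L (x + y) = graded_proj L x + graded_proj L y"
proof -
  let ?A = "{p. component x p \<noteq> 0} \<union> {p. component y p \<noteq> 0}"
  have fin: "finite ?A"
    using finite_component_support by blast
  have sub: "{p. component (x + y) p \<noteq> 0} \<subseteq> ?A"
    by (auto simp: component_add)
  show ?thesis
    unfolding graded_proj_eq_sum[OF fin sub] graded_proj_eq_sum[OF fin Un_upper1]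
      graded_proj_eq_sum[OF fin Un_upper2] sum.distrib[symmetric]
    by (rule sum.cong) (auto simp: component_add)
qed

lemma graded_proj_sum: "finite I \<Longrightarrow> graded_proj L (sum h I) = (\<Sum>i\<in>I. graded_proj L (h i))"
proof (induction I rule: finite_induct)
  case empty
  show ?case
    using graded_proj_add[of L 0 0] by simp
qed (simp add: graded_proj_add)

lemma graded_proj_homogeneous: "h \<in> J k m \<Longrightarrow> graded_proj L h = (if L k m then h else 0)"
  by (subst graded_proj_eq_sum[where A = "{(k, m)}"]) (auto simp: component_homogeneous)

lemma graded_proj_mem: "graded_proj L x \<in> graded_part J L"
proof -
  let ?f = "\<lambda>p. if L (fst p) (snd p) then component x p else 0"
  have sub: "{p. ?f p \<noteq> 0} \<subseteq> {p. component x p \<noteq> 0}"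
    by auto
  have "graded_proj L x = sum ?f {p. ?f p \<noteq> 0}"
    unfolding graded_proj_def by (rule sum_over_support[OF finite_component_support sub])
  moreover have "finite {p. ?f p \<noteq> 0}"
    using finite_subset[OF sub finite_component_support] .
  ultimately show ?thesis
    unfolding graded_part_def using component_mem zero_closed
    by (intro CollectI exI[of _ ?f] conjI) auto
qed

lemma graded_proj_idem: "x \<in> graded_part J L \<Longrightarrow> graded_proj L x = x"
  unfolding graded_proj_def
  by (subst (3) sum_component) (rule sum.cong, auto dest: component_graded_part)

lemma graded_proj_mult:
  assumes face: "\<And>k m k' m'. L k m \<Longrightarrow> L k' m' \<Longrightarrow>
      L' (k + k') (m + m') \<longleftrightarrow> L' k m \<and> L' k' m'"
    and "x \<in> graded_part J L" "y \<in> graded_part J L"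
  shows "graded_proj L' (x * y) = graded_proj L' x * graded_proj L' y"
proof -
  obtain A f where A: "finite A" "\<And>p. p \<in> A \<Longrightarrow> f p \<in> J (fst p) (snd p)"
      "\<And>p. p \<in> A \<Longrightarrow> L (fst p) (snd p)" "x = sum f A"
    using graded_partE[OF assms(2)] by blast
  obtain B g where B: "finite B" "\<And>q. q \<in> B \<Longrightarrow> g q \<in> J (fst q) (snd q)"
      "\<And>q. q \<in> B \<Longrightarrow> L (fst q) (snd q)" "y = sum g B"
    using graded_partE[OF assms(3)] by blast
  let ?Pf = "\<lambda>p. if L' (fst p) (snd p) then f p else 0"
  let ?Pg = "\<lambda>q. if L' (fst q) (snd q) then g q else 0"
  have "graded_proj L' (x * y) = (\<Sum>p\<in>A. \<Sum>q\<in>B. graded_proj L' (f p * g q))"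
    using A B by (simp add: sum_product graded_proj_sum)
  also have "\<dots> = (\<Sum>p\<in>A. \<Sum>q\<in>B. ?Pf p * ?Pg q)"
  proof (intro sum.cong refl)
    fix p q assume "p \<in> A" "q \<in> B"
    then have "f p * g q \<in> J (fst p + fst q) (snd p + snd q)"
      and "L' (fst p + fst q) (snd p + snd q) \<longleftrightarrow> L' (fst p) (snd p) \<and> L' (fst q) (snd q)"
      using mult_closed[OF A(2) B(2)] face[OF A(3) B(3)] by blast+
    then show "graded_proj L' (f p * g q) = ?Pf p * ?Pg q"
      by (simp add: graded_proj_homogeneous)
  qed
  also have "\<dots> = graded_proj L' x * graded_proj L' y"
  proof -
    have "graded_proj L' x = (\<Sum>p\<in>A. ?Pf p)"
      unfolding A(4) graded_proj_sum[OF A(1)]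
      by (rule sum.cong) (simp_all add: A(2) graded_proj_homogeneous)
    moreover have "graded_proj L' y = (\<Sum>q\<in>B. ?Pg q)"
      unfolding B(4) graded_proj_sum[OF B(1)]
      by (rule sum.cong) (simp_all add: B(2) graded_proj_homogeneous)
    ultimately show ?thesis
      by (simp add: sum_product)
  qed
  finally show ?thesis .
qed

theorem fin_gen_algebra_face:
  assumes face: "\<And>k m k' m'. L k m \<Longrightarrow> L k' m' \<Longrightarrow>
      L' (k + k') (m + m') \<longleftrightarrow> L' k m \<and> L' k' m'"
    and sub: "\<And>k m. L' k m \<Longrightarrow> L k m"
    and "L' 0 0"
    and "fin_gen_algebra (J 0 0) (graded_part J L)"
  shows "fin_gen_algebra (J 0 0) (graded_part J L')"
proof -
  let ?P = "graded_proj L'"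
  obtain S where S: "finite S" "S \<subseteq> graded_part J L" "ring_gen (J 0 0 \<union> S) = graded_part J L"
    using assms(4) unfolding fin_gen_algebra_def by blast
  have fixes_J00: "?P h = h" if "h \<in> J 0 0" for h
    using graded_proj_homogeneous[OF that] \<open>L' 0 0\<close> by simp
  have "graded_part J L' = ?P ` graded_part J L"
  proof
    show "graded_part J L' \<subseteq> ?P ` graded_part J L"
    proof
      fix x assume x: "x \<in> graded_part J L'"
      have "graded_part J L' \<subseteq> graded_part J L"
        using sub by (rule graded_part_mono)
      with x have "x \<in> graded_part J L"
        by blast
      then show "x \<in> ?P ` graded_part J L"
        by (rule rev_image_eqI) (use graded_proj_idem[OF x] in simp)
    qed
    show "?P ` graded_part J L \<subseteq> graded_part J L'"
      by (rule image_subsetI) (rule graded_proj_mem)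
  qed
  also have "\<dots> = ring_gen (?P ` (J 0 0 \<union> S))"
    unfolding S(3)[symmetric]
  proof (rule ring_gen_image)
    show "?P 1 = 1"
      using fixes_J00[OF one_closed] .
    show "?P (a + b) = ?P a + ?P b" for a b
      by (rule graded_proj_add)
    show "?P (a * b) = ?P a * ?P b"
      if "a \<in> ring_gen (J 0 0 \<union> S)" "b \<in> ring_gen (J 0 0 \<union> S)" for a b
      using face that unfolding S(3) by (rule graded_proj_mult)
  qed
  also have "\<dots> = ring_gen (J 0 0 \<union> ?P ` S)"
  proof -
    have "?P ` J 0 0 = (\<lambda>h. h) ` J 0 0"
      by (rule image_cong[OF refl fixes_J00])
    then show ?thesis
      by (simp only: image_Un image_ident)
  qed
  finally have generated: "graded_part J L' = ring_gen (J 0 0 \<union> ?P ` S)" .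
  show ?thesis
    unfolding fin_gen_algebra_def
  proof (intro exI conjI)
    show "finite (?P ` S)"
      using S(1) by (rule finite_imageI)
    show "?P ` S \<subseteq> graded_part J L'"
      by (rule image_subsetI) (rule graded_proj_mem)
    show "ring_gen (J 0 0 \<union> ?P ` S) = graded_part J L'"
      by (rule generated[symmetric])
  qed
qed

end

lemma ray_add_iff:
  fixes n :: rat
  assumes "of_nat m \<le> of_nat k * n" "of_nat m' \<le> of_nat k' * n"
  shows "of_nat (m + m') = of_nat (k + k') * n \<longleftrightarrow>
    of_nat m = of_nat k * n \<and> of_nat m' = of_nat k' * n"
  using assms unfolding of_nat_add distrib_right by linarith

theorem proposition6p10:
  fixes J :: "nat \<Rightarrow> nat \<Rightarrow> 'a::comm_ring_1 set" and n :: rat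
  assumes "bigraded J"
    and "n > 0"
    and "fin_gen_algebra (J 0 0) (J_le J n)"
  shows "fin_gen_algebra (J 0 0) (J_eq J n)"
proof -
  interpret bigraded_ring J
    by unfold_locales (rule assms(1))
  show ?thesis
    using assms(3) unfolding J_le_def J_eq_def
    by (rule fin_gen_algebra_face[rotated 3]) (fact ray_add_iff, simp_all)
qed

end
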